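(* Let $F$ be a field of characteristic zero and $n$ a natural number. There is no nonzero element $l\in W(n,0)$ such that every basis element $b\in\{e^{a_1x_1}\cdots e^{a_nx_n}x_1^{b_1}\cdots x_n^{b_n}\partial_i: a_j,b_j\in\mathbb Z,1\le i\le n\}$ is an eigenvector of $\mathrm{ad}\,l$ (i.e. $[b,l]\in Fb$ for all such $b$).
   Context: $W(n,0)$ is the Lie algebra with basis $e^{\alpha}x^{\beta}\partial_i$ ($\alpha,\beta\in\mathbb Z^n$, $1\le i\le n$), realized as vector fields $f\partial_i$ with $f$ in the commutative algebra with basis $e^{\alpha}x^{\beta}$ (multiplication adding exponents), $\partial_i(e^{\alpha}x^{\beta})=a_ie^{\alpha}x^{\beta}+b_ie^{\alpha}x^{\beta-\epsilon_i}$, and bracket $[f\partial_i,g\partial_j]=f\partial_i(g)\partial_j-g\partial_j(f)\partial_i$. *)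

theory Defs
  imports Main
begin

text \<open>Basis element e^alpha x^beta d_i of W(n,0) is indexed by (alpha, beta, i),
 where alpha, beta :: nat => int are exponent vectors (components j < n relevant,
 components j >= n required to be 0) and i < n (0-based index of d_{i+1}).\<close>

type_synonym widx = "(nat \<Rightarrow> int) \<times> (nat \<Rightarrow> int) \<times> nat"

definition wbasis :: "nat \<Rightarrow> widx set" where
  "wbasis n = {(a, b, i). i < n \<and> (\<forall>j\<ge>n. a j = 0 \<and> b j = 0)}"

definition wsupp :: "(widx \<Rightarrow> 'a::zero) \<Rightarrow> widx set" where
  "wsupp l = {k. l k \<noteq> 0}"

definition W :: "nat \<Rightarrow> (widx \<Rightarrow> 'a::field) set" where
  "W n = {l. finite (wsupp l) \<and> wsupp l \<subseteq> wbasis n}"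

definition wsingle :: "widx \<Rightarrow> 'a::zero \<Rightarrow> widx \<Rightarrow> 'a" where
  "wsingle k c = (\<lambda>k'. if k' = k then c else 0)"

definition unitv :: "nat \<Rightarrow> nat \<Rightarrow> int" where
  "unitv i = (\<lambda>j. if j = i then 1 else 0)"

text \<open>Bracket of basis elements:
 [e^a x^b d_i, e^c x^d d_j] = (e^a x^b) d_i(e^c x^d) d_j - (e^c x^d) d_j(e^a x^b) d_i, with
 d_i(e^c x^d) = c_i e^c x^d + d_i e^c x^(d - eps_i).\<close>
fun wbr :: "widx \<Rightarrow> widx \<Rightarrow> widx \<Rightarrow> 'a::field" where
  "wbr (a, b, i) (c, d, j) =
     (\<lambda>k. wsingle ((\<lambda>t. a t + c t), (\<lambda>t. b t + d t), j) (of_int (c i)) k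
        + wsingle ((\<lambda>t. a t + c t), (\<lambda>t. b t + d t - unitv i t), j) (of_int (d i)) k
        - wsingle ((\<lambda>t. a t + c t), (\<lambda>t. b t + d t), i) (of_int (a j)) k
        - wsingle ((\<lambda>t. a t + c t), (\<lambda>t. b t + d t - unitv j t), i) (of_int (b j)) k)"

definition wbracket :: "(widx \<Rightarrow> 'a::field) \<Rightarrow> (widx \<Rightarrow> 'a) \<Rightarrow> widx \<Rightarrow> 'a" where
  "wbracket l m = (\<lambda>k. \<Sum>p\<in>wsupp l. \<Sum>q\<in>wsupp m. l p * m q * wbr p q k)"

end

theory Submission
  imports Defs
begin

(* Write (c, d, j) for e^c x^d del_j. A coefficient of [b, l] at an index other than b must vanish.
   For b = del_i this gives the recurrence
     l (c, d, j) * c_i + l (c, d + eps_i, j) * (d_i + 1) = 0    for (c, d, j) <> (0, 0, i).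
   In characteristic zero, a nonzero coefficient with c_i <> 0 therefore propagates along
   d, d + eps_i, d + 2 eps_i, ..., contradicting finite support; and a nonzero coefficient at
   (0, e, j) with e_i <> 0 forces (e, j) = (eps_i, i). So l is a combination of the del_m and
   x_m del_m. Finally, the del_m-coefficient of [x_m del_m, l] is -l (0, 0, m), and the
   e^{x_m} x_m del_m-coefficient of [e^{x_m} del_m, l] is -l (0, eps_m, m), both of which must vanish. *)

lemma unitv_same [simp]: "unitv i i = 1"
  and unitv_other [simp]: "j \<noteq> i \<Longrightarrow> unitv i j = 0"
  by (simp_all add: unitv_def)

lemma unitv_nonzero [simp]: "unitv i \<noteq> (\<lambda>_. 0)" "(\<lambda>_. 0) \<noteq> unitv i"
  by (auto simp: fun_eq_iff unitv_def)

lemma minus_unitv_eq_iff: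
  "((\<lambda>t. b t - unitv i t) = d) \<longleftrightarrow> (b = (\<lambda>t. d t + unitv i t))"
  "(d = (\<lambda>t. b t - unitv i t)) \<longleftrightarrow> (b = (\<lambda>t. d t + unitv i t))"
  by (auto simp: fun_eq_iff algebra_simps)

lemma unitv_plus_eq_unitv_iff:
  "((\<lambda>t. unitv i t + c t) = unitv i) \<longleftrightarrow> c = (\<lambda>_. 0)"
  "(unitv i = (\<lambda>t. unitv i t + c t)) \<longleftrightarrow> c = (\<lambda>_. 0)"
  by (auto simp: fun_eq_iff)

lemma wbasis_exponent_bound:
  "(a, b, i) \<in> wbasis n \<Longrightarrow> a t \<noteq> 0 \<or> b t \<noteq> 0 \<Longrightarrow> t < n"
  unfolding wbasis_def by (auto simp flip: not_le)

lemma wsupp_wsingle_one: "wsupp (wsingle b (1::'a::field)) = {b}"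
  by (auto simp: wsupp_def wsingle_def)

lemma wbracket_wsingle_eq_sum:
  fixes l :: "widx \<Rightarrow> 'a::field"
  assumes "finite (wsupp l)" and "finite Q" and "\<And>q. q \<notin> Q \<Longrightarrow> wbr b q k = (0::'a)"
  shows "wbracket (wsingle b 1) l k = (\<Sum>q\<in>Q. l q * wbr b q k)"
proof -
  have "wbracket (wsingle b 1) l k = (\<Sum>q\<in>wsupp l. l q * wbr b q k)"
    unfolding wbracket_def wsupp_wsingle_one by (simp add: wsingle_def)
  also have "\<dots> = (\<Sum>q\<in>wsupp l \<union> Q. l q * wbr b q k)"
    using assms(1,2) by (intro sum.mono_neutral_left) (auto simp: wsupp_def)
  also have "\<dots> = (\<Sum>q\<in>Q. l q * wbr b q k)"
    using assms by (intro sum.mono_neutral_right) auto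
  finally show ?thesis .
qed

lemma wbracket_partial_coeff:
  fixes l :: "widx \<Rightarrow> 'a::field"
  assumes "finite (wsupp l)"
  shows "wbracket (wsingle ((\<lambda>_. 0), (\<lambda>_. 0), i) 1) l (c, d, j)
     = l (c, d, j) * of_int (c i) + l (c, \<lambda>t. d t + unitv i t, j) * of_int (d i + 1)"
proof -
  let ?b = "((\<lambda>_. 0), (\<lambda>_. 0), i)" and ?k = "(c, d, j)"
  let ?Q = "{(c, d, j), (c, \<lambda>t. d t + unitv i t, j)}"
  have distinct: "(c, d, j) \<noteq> (c, \<lambda>t. d t + unitv i t, j)"
    by (auto simp: fun_eq_iff unitv_def)
  have "wbr ?b q ?k = (0::'a)" if "q \<notin> ?Q" for q
    using that by (cases q) (auto simp: wsingle_def minus_unitv_eq_iff)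
  then have "wbracket (wsingle ?b 1) l ?k = (\<Sum>q\<in>?Q. l q * wbr ?b q ?k)"
    by (intro wbracket_wsingle_eq_sum[OF assms]) simp_all
  then show ?thesis
    using distinct by (auto simp: wsingle_def fun_eq_iff unitv_def)
qed

lemma wbracket_euler_coeff:
  fixes l :: "widx \<Rightarrow> 'a::field"
  assumes "finite (wsupp l)"
  shows "wbracket (wsingle ((\<lambda>_. 0), unitv m, m) 1) l ((\<lambda>_. 0), (\<lambda>_. 0), m)
     = - l ((\<lambda>_. 0), (\<lambda>_. 0), m)"
proof -
  let ?b = "((\<lambda>_. 0), unitv m, m)" and ?k = "((\<lambda>_. 0), (\<lambda>_. 0), m)"
  have "wbr ?b q ?k = (0::'a)" if "q \<notin> {?k}" for q
    using that by (cases q) (auto simp: wsingle_def fun_eq_iff unitv_def)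
  then have "wbracket (wsingle ?b 1) l ?k = (\<Sum>q\<in>{?k}. l q * wbr ?b q ?k)"
    by (intro wbracket_wsingle_eq_sum[OF assms]) simp_all
  then show ?thesis
    by (auto simp: wsingle_def fun_eq_iff unitv_def)
qed

lemma wbracket_exp_coeff:
  fixes l :: "widx \<Rightarrow> 'a::field"
  assumes "finite (wsupp l)"
  shows "wbracket (wsingle (unitv m, (\<lambda>_. 0), m) 1) l (unitv m, unitv m, m)
     = 2 * l ((\<lambda>_. 0), \<lambda>t. 2 * unitv m t, m) - l ((\<lambda>_. 0), unitv m, m)"
proof -
  let ?b = "(unitv m, (\<lambda>_. 0), m)" and ?k = "(unitv m, unitv m, m)"
  let ?Q = "{((\<lambda>_. 0), \<lambda>t. 2 * unitv m t, m), ((\<lambda>_. 0), unitv m, m)}"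
  have distinct: "(\<lambda>t. 2 * unitv m t) \<noteq> unitv m"
    by (auto simp: fun_eq_iff unitv_def)
  have "wbr ?b q ?k = (0::'a)" if "q \<notin> ?Q" for q
    using that by (cases q) (auto simp: wsingle_def minus_unitv_eq_iff unitv_plus_eq_unitv_iff)
  then have "wbracket (wsingle ?b 1) l ?k = (\<Sum>q\<in>?Q. l q * wbr ?b q ?k)"
    by (intro wbracket_wsingle_eq_sum[OF assms]) simp_all
  then show ?thesis
    using distinct by (auto simp: wsingle_def fun_eq_iff unitv_def)
qed

locale ad_eigenbasis =
  fixes n :: nat and l :: "widx \<Rightarrow> 'a::field_char_0"
  assumes in_W: "l \<in> W n"
    and eigen: "\<forall>b\<in>wbasis n. \<exists>c::'a. wbracket (wsingle b 1) l = (\<lambda>k. c * wsingle b 1 k)"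
begin

lemma finite_wsupp: "finite (wsupp l)"
  using in_W by (simp add: W_def)

lemma in_wbasis_if_nonzero: "l q \<noteq> 0 \<Longrightarrow> q \<in> wbasis n"
  using in_W by (auto simp: W_def wsupp_def)

lemma wbracket_coeff_off_diagonal:
  assumes "b \<in> wbasis n" and "k \<noteq> b"
  shows "wbracket (wsingle b 1) l k = 0"
proof -
  from eigen assms(1) obtain c :: 'a where "wbracket (wsingle b 1) l = (\<lambda>k. c * wsingle b 1 k)"
    by blast
  then show ?thesis
    using assms(2) by (simp add: wsingle_def)
qed

lemma partial_recurrence:
  assumes "i < n" and "(c, d, j) \<noteq> ((\<lambda>_. 0), (\<lambda>_. 0), i)"
  shows "l (c, d, j) * of_int (c i) + l (c, \<lambda>t. d t + unitv i t, j) * of_int (d i + 1) = 0"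
proof -
  have "((\<lambda>_. 0), (\<lambda>_. 0), i) \<in> wbasis n"
    using assms(1) by (simp add: wbasis_def)
  from wbracket_coeff_off_diagonal[OF this assms(2)] show ?thesis
    by (simp add: wbracket_partial_coeff[OF finite_wsupp])
qed

lemma exp_zero_if_coeff_nonzero:
  assumes "l (c, d, j) \<noteq> 0"
  shows "c = (\<lambda>_. 0)"
proof (rule ccontr)
  assume c_nonzero: "c \<noteq> (\<lambda>_. 0)"
  then obtain t where ct: "c t \<noteq> 0"
    by auto
  have "t < n"
    using wbasis_exponent_bound[OF in_wbasis_if_nonzero[OF assms]] ct by blast
  define shift where "shift m = (c, \<lambda>s. d s + int m * unitv t s, j)" for m :: nat
  have "l (shift m) \<noteq> 0" for m
  proof (induction m)
    case 0
    then show ?case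
      using assms by (simp add: shift_def)
  next
    case (Suc m)
    let ?d = "\<lambda>s. d s + int m * unitv t s"
    have "(c, ?d, j) \<noteq> ((\<lambda>_. 0), (\<lambda>_. 0), t)"
      using c_nonzero by simp
    from partial_recurrence[OF \<open>t < n\<close> this] Suc ct
    have "l (c, \<lambda>s. ?d s + unitv t s, j) \<noteq> 0"
      by (auto simp: shift_def)
    moreover have "shift (Suc m) = (c, \<lambda>s. ?d s + unitv t s, j)"
      by (simp add: shift_def algebra_simps)
    ultimately show ?case
      by simp
  qed
  then have "range shift \<subseteq> wsupp l"
    by (auto simp: wsupp_def)
  moreover have "inj shift"
  proof
    fix x y
    assume "shift x = shift y"
    then have "(\<lambda>s. d s + int x * unitv t s) = (\<lambda>s. d s + int y * unitv t s)"
      by (simp add: shift_def)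
    from fun_cong[OF this, of t] show "x = y"
      by simp
  qed
  ultimately have "infinite (wsupp l)"
    by (meson finite_imageD finite_subset infinite_UNIV_nat)
  then show False
    using finite_wsupp by contradiction
qed

lemma exponent_eq_unitv_if_coeff_nonzero:
  assumes "l ((\<lambda>_. 0), e, j) \<noteq> 0" and "e i \<noteq> 0"
  shows "e = unitv i \<and> j = i"
proof -
  have "i < n"
    using wbasis_exponent_bound[OF in_wbasis_if_nonzero[OF assms(1)]] assms(2) by blast
  define e' where "e' = (\<lambda>s. e s - unitv i s)"
  have e: "(\<lambda>s. e' s + unitv i s) = e" and "e' i + 1 = e i"
    by (simp_all add: e'_def)
  have "e' = (\<lambda>_. 0) \<and> j = i"
  proof (rule ccontr)
    assume "\<not> (e' = (\<lambda>_. 0) \<and> j = i)"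
    then have "((\<lambda>_. 0), e', j) \<noteq> ((\<lambda>_. 0), (\<lambda>_. 0), i)"
      by simp
    from partial_recurrence[OF \<open>i < n\<close> this] show False
      using assms e \<open>e' i + 1 = e i\<close> by simp
  qed
  then show ?thesis
    using e by auto
qed

lemma coeff_partial_eq_zero:
  assumes "m < n"
  shows "l ((\<lambda>_. 0), (\<lambda>_. 0), m) = 0"
proof -
  have "wbracket (wsingle ((\<lambda>_. 0), unitv m, m) 1) l ((\<lambda>_. 0), (\<lambda>_. 0), m) = 0"
    using assms by (intro wbracket_coeff_off_diagonal) (auto simp: wbasis_def)
  then show ?thesis
    by (simp add: wbracket_euler_coeff[OF finite_wsupp])
qed

lemma coeff_euler_eq_zero:
  assumes "m < n"
  shows "l ((\<lambda>_. 0), unitv m, m) = 0"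
proof -
  have "wbracket (wsingle (unitv m, (\<lambda>_. 0), m) 1) l (unitv m, unitv m, m) = 0"
    using assms by (intro wbracket_coeff_off_diagonal) (auto simp: wbasis_def)
  then have "2 * l ((\<lambda>_. 0), \<lambda>t. 2 * unitv m t, m) = l ((\<lambda>_. 0), unitv m, m)"
    by (simp add: wbracket_exp_coeff[OF finite_wsupp])
  moreover have "l ((\<lambda>_. 0), \<lambda>t. 2 * unitv m t, m) = 0"
  proof -
    have "(\<lambda>t. 2 * unitv m t) \<noteq> unitv m"
      by (auto simp: fun_eq_iff unitv_def)
    then show ?thesis
      using exponent_eq_unitv_if_coeff_nonzero[of "\<lambda>t. 2 * unitv m t" m m] by auto
  qed
  ultimately show ?thesis
    by simp
qed

lemma l_eq_zero: "l = (\<lambda>_. 0)"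
proof
  fix q
  show "l q = 0"
  proof (rule ccontr)
    assume nonzero: "l q \<noteq> 0"
    obtain c d j where q: "q = (c, d, j)"
      by (cases q)
    have "j < n"
      using in_wbasis_if_nonzero[OF nonzero] q by (simp add: wbasis_def)
    have c: "c = (\<lambda>_. 0)"
      using exp_zero_if_coeff_nonzero nonzero q by blast
    show False
    proof (cases "d = (\<lambda>_. 0)")
      case True
      then show False
        using coeff_partial_eq_zero[OF \<open>j < n\<close>] nonzero q c by simp
    next
      case False
      then obtain t where "d t \<noteq> 0"
        by auto
      with exponent_eq_unitv_if_coeff_nonzero nonzero q c have "d = unitv t" "j = t"
        by blast+
      then show False
        using coeff_euler_eq_zero[OF \<open>j < n\<close>] nonzero q c by simp
    qed
  qed
qed

end

theorem corollary1:
  fixes n :: nat and l :: "widx \<Rightarrow> 'a::field_char_0"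
  assumes "l \<in> W n" and "l \<noteq> (\<lambda>_. 0)"
  shows "\<not> (\<forall>b\<in>wbasis n. \<exists>c::'a.
            wbracket (wsingle b 1) l = (\<lambda>k. c * wsingle b 1 k))"
proof
  assume "\<forall>b\<in>wbasis n. \<exists>c::'a. wbracket (wsingle b 1) l = (\<lambda>k. c * wsingle b 1 k)"
  with assms(1) interpret ad_eigenbasis n l
    by unfold_locales
  show False
    using l_eq_zero assms(2) by contradiction
qed

end
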